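(* Consider binary classification with $\ell_1$ loss: $y:\mathcal{X}\to[0,1]$, every $h\in\mathcal{H}$ takes values in $\{0,1\}$, and $l(a,b)=|a-b|$. Let $p_s$ be a probability distribution on $\mathcal{X}$, let $h_p^*\in\arg\min_{h\in\mathcal{H}}\mathcal{L}_p(h)$, and let $\{(h_k,w_k)\}_{k=1}^K$ (with $h_k\in\mathcal{H}$, $w_k:\mathcal{X}\to[0,1]$ measurable, $\sum_k w_k(x)=1$) be an optimal model ensemble. Then for every $h\in\mathcal{H}$, $$\mathcal{L}_p(h_p^* )\le\mathcal{L}_p(h)\le\mathcal{L}_p(h_p^* )+\mathcal{L}_{p_s}\Big(h,\sum_{k=1}^K w_k\cdot h_k\Big)+\tfrac12\,d_{\bar{\mathcal{H}}\triangle\bar{\mathcal{H}}}(p,p_s).$$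
   Context: $\mathcal{X}$ is a measurable space with fixed measurable labeling function $y$. For a distribution $q$ on $\mathcal{X}$ and measurable real functions $g,g'$: $\mathcal{L}_q(g)=\mathbf{E}_{x\sim q}[|g(x)-y(x)|]$ and $\mathcal{L}_q(g,g')=\mathbf{E}_{x\sim q}[|g(x)-g'(x)|]$. There are $K$ clients with distributions $p_k$ on $\mathcal{X}$ and positive integers $n_k$; $\pi_k=n_k/\sum_j n_j$, $p=\sum_k\pi_k p_k$. The ensemble $\sum_k w_k\cdot h_k$ is $x\mapsto\sum_k w_k(x)h_k(x)$; it is an optimal model ensemble if $\mathcal{L}_p(\sum_k w_k\cdot h_k)\le\min_{h\in\mathcal{H}}\mathcal{L}_p(h)$. The spanned class is $\bar{\mathcal{H}}=\{\sum_{k=1}^K w_k\cdot h_k:\ h_k\in\mathcal{H},\ w_k:\mathcal{X}\to[0,1]\text{ measurable},\ \sum_k w_k(x)=1\ \forall x\}$, and $d_{\bar{\mathcal{H}}\triangle\bar{\mathcal{H}}}(q,q')=2\sup_{g,g'\in\bar{\mathcal{H}}}|\mathcal{L}_q(g,g')-\mathcal{L}_{q'}(g,g')|$. *)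

theory Defs
  imports "HOL-Probability.Probability"
begin

definition loss :: "'a measure \<Rightarrow> ('a \<Rightarrow> real) \<Rightarrow> ('a \<Rightarrow> real) \<Rightarrow> real" where
  "loss q y g = (\<integral>x. \<bar>g x - y x\<bar> \<partial>q)"

definition disc :: "'a measure \<Rightarrow> ('a \<Rightarrow> real) \<Rightarrow> ('a \<Rightarrow> real) \<Rightarrow> real" where
  "disc q g g' = (\<integral>x. \<bar>g x - g' x\<bar> \<partial>q)"

definition ensemble :: "nat \<Rightarrow> (nat \<Rightarrow> 'a \<Rightarrow> real) \<Rightarrow> (nat \<Rightarrow> 'a \<Rightarrow> real) \<Rightarrow> 'a \<Rightarrow> real" where
  "ensemble K w h = (\<lambda>x. \<Sum>k<K. w k x * h k x)"

definition mixture :: "'a measure \<Rightarrow> nat \<Rightarrow> (nat \<Rightarrow> nat) \<Rightarrow> (nat \<Rightarrow> 'a measure) \<Rightarrow> 'a measure" where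
  "mixture M K n P = measure_of (space M) (sets M)
     (\<lambda>A. \<Sum>k<K. ennreal (real (n k) / real (\<Sum>j<K. n j)) * emeasure (P k) A)"

definition spanned :: "'a measure \<Rightarrow> nat \<Rightarrow> ('a \<Rightarrow> real) set \<Rightarrow> ('a \<Rightarrow> real) set" where
  "spanned M K H = {ensemble K w h | w h.
      (\<forall>k<K. h k \<in> H) \<and>
      (\<forall>k<K. w k \<in> borel_measurable M \<and> (\<forall>x. w k x \<in> {0..1})) \<and>
      (\<forall>x. (\<Sum>k<K. w k x) = 1)}"

definition dHH :: "'a measure \<Rightarrow> nat \<Rightarrow> ('a \<Rightarrow> real) set \<Rightarrow> 'a measure \<Rightarrow> 'a measure \<Rightarrow> real" where
  "dHH M K H q q' = 2 * (SUP gg \<in> spanned M K H \<times> spanned M K H.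
      \<bar>disc q (fst gg) (snd gg) - disc q' (fst gg) (snd gg)\<bar>)"

end

theory Submission
  imports Defs
begin

text \<open>With \<open>g\<close> the optimal ensemble, the triangle inequality for the \<open>\<ell>\<^sub>1\<close> disagreement gives
  \<open>L\<^sub>p(h) \<le> L\<^sub>p(g) + L\<^sub>p(h, g)\<close>. Optimality of \<open>g\<close> bounds \<open>L\<^sub>p(g)\<close> by \<open>L\<^sub>p(h\<^sup>*)\<close>, and since both
  \<open>h\<close> and \<open>g\<close> lie in the spanned class, \<open>L\<^sub>p(h, g)\<close> differs from \<open>L\<^sub>p\<^sub>s(h, g)\<close> by at most
  half the \<open>H\<^sub>\<triangle>H\<close>-divergence; the supremum defining it is finite because all
  disagreements lie in \<open>[0, 1]\<close>.\<close>

definition unit_measurable :: "'a measure \<Rightarrow> ('a \<Rightarrow> real) set" where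
  "unit_measurable M = {f. f \<in> borel_measurable M \<and> (\<forall>x. f x \<in> {0..1})}"

lemma unit_measurableI:
  "f \<in> borel_measurable M \<Longrightarrow> (\<And>x. f x \<in> {0..1}) \<Longrightarrow> f \<in> unit_measurable M"
  unfolding unit_measurable_def by blast

lemma unit_measurableD:
  assumes "f \<in> unit_measurable M"
  shows "f \<in> borel_measurable M" "f x \<in> {0..1}"
  using assms unfolding unit_measurable_def by auto

lemma unit_measurable_abs_diff_le:
  "f \<in> unit_measurable M \<Longrightarrow> g \<in> unit_measurable M \<Longrightarrow> \<bar>f x - g x\<bar> \<le> 1"
  using unit_measurableD(2)[of f M x] unit_measurableD(2)[of g M x] by auto

lemma loss_eq_disc: "loss q y g = disc q g y"
  unfolding loss_def disc_def ..

lemma integrable_abs_diff_unit_measurable: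
  assumes "finite_measure q" "sets q = sets M"
    and "f \<in> unit_measurable M" "g \<in> unit_measurable M"
  shows "integrable q (\<lambda>x. \<bar>f x - g x\<bar>)"
proof -
  interpret finite_measure q by fact
  have "(\<lambda>x. \<bar>f x - g x\<bar>) \<in> borel_measurable q"
    using unit_measurableD(1)[OF assms(3)] unit_measurableD(1)[OF assms(4)]
    by (simp add: measurable_cong_sets[OF assms(2) refl])
  moreover have "AE x in q. norm \<bar>f x - g x\<bar> \<le> 1"
    using assms(3,4) by (intro AE_I2) (simp add: unit_measurable_abs_diff_le)
  ultimately show ?thesis by (intro integrable_const_bound)
qed

lemma disc_unit_interval:
  assumes "prob_space q" "sets q = sets M"
    and "f \<in> unit_measurable M" "g \<in> unit_measurable M"
  shows "disc q f g \<in> {0..1}"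
proof -
  interpret prob_space q by fact
  have int: "integrable q (\<lambda>x. \<bar>f x - g x\<bar>)"
    using assms by (intro integrable_abs_diff_unit_measurable) (auto intro: finite_measure_axioms)
  have "disc q f g \<le> integral\<^sup>L q (\<lambda>x. 1)"
    unfolding disc_def using assms(3,4)
    by (intro integral_mono[OF int]) (simp_all add: unit_measurable_abs_diff_le)
  then show ?thesis
    by (simp add: disc_def prob_space)
qed

lemma disc_triangle:
  assumes "finite_measure q" "sets q = sets M"
    and "f \<in> unit_measurable M" "g \<in> unit_measurable M" "h \<in> unit_measurable M"
  shows "disc q f h \<le> disc q f g + disc q g h"
proof -
  have int: "integrable q (\<lambda>x. \<bar>u x - v x\<bar>)"
    if "u \<in> {f, g, h}" "v \<in> {f, g, h}" for u v
    using that assms by (intro integrable_abs_diff_unit_measurable) auto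
  have "disc q f h \<le> integral\<^sup>L q (\<lambda>x. \<bar>f x - g x\<bar> + \<bar>g x - h x\<bar>)"
    unfolding disc_def by (intro integral_mono int Bochner_Integration.integrable_add) auto
  also have "\<dots> = disc q f g + disc q g h"
    unfolding disc_def by (intro Bochner_Integration.integral_add int) auto
  finally show ?thesis .
qed

lemma sets_mixture [simp]: "sets (mixture M K n P) = sets M"
  and space_mixture [simp]: "space (mixture M K n P) = space M"
  unfolding mixture_def by (simp_all add: sets.space_closed)

lemma prob_space_mixture:
  assumes n_sum: "0 < (\<Sum>j<K. n j)"
    and P_prob: "\<forall>k<K. prob_space (P k) \<and> sets (P k) = sets M"
  shows "prob_space (mixture M K n P)"
proof -
  define \<pi> where "\<pi> k = ennreal (real (n k) / real (\<Sum>j<K. n j))" for k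
  let ?\<mu> = "\<lambda>A. \<Sum>k<K. \<pi> k * emeasure (P k) A"
  have sets_P: "sets (P k) = sets M" if "k < K" for k
    using P_prob that by blast
  have "countably_additive (sets M) ?\<mu>"
    unfolding countably_additive_def
  proof (intro allI impI)
    fix A :: "nat \<Rightarrow> _"
    assume A: "range A \<subseteq> sets M" "disjoint_family A" "\<Union> (range A) \<in> sets M"
    have "(\<Sum>i. ?\<mu> (A i)) = (\<Sum>k<K. \<Sum>i. \<pi> k * emeasure (P k) (A i))"
      by (rule suminf_sum) (rule summableI)
    also have "\<dots> = ?\<mu> (\<Union> (range A))"
      using A sets_P by (intro sum.cong refl) (simp add: suminf_emeasure)
    finally show "(\<Sum>i. ?\<mu> (A i)) = ?\<mu> (\<Union> (range A))" .
  qed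
  moreover have "positive (sets M) ?\<mu>"
    unfolding positive_def using sets_P by (auto intro!: sum.neutral)
  ultimately have "emeasure (mixture M K n P) (space M) = ?\<mu> (space M)"
    unfolding mixture_def \<pi>_def[symmetric]
    by (intro emeasure_measure_of_sigma sets.sigma_algebra_axioms) auto
  also have "\<dots> = (\<Sum>k<K. \<pi> k)"
    using P_prob by (intro sum.cong refl)
      (metis lessThan_iff mult.right_neutral prob_space.emeasure_space_1 sets_eq_imp_space_eq)
  also have "\<dots> = ennreal (\<Sum>k<K. real (n k) / real (\<Sum>j<K. n j))"
    unfolding \<pi>_def by (intro sum_ennreal) (auto intro!: divide_nonneg_nonneg sum_nonneg)
  also have "(\<Sum>k<K. real (n k) / real (\<Sum>j<K. n j)) = 1"
  proof -
    have "real (\<Sum>j<K. n j) \<noteq> 0"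
      using n_sum by linarith
    then show ?thesis
      by (simp add: sum_divide_distrib[symmetric] of_nat_sum[symmetric] del: of_nat_sum)
  qed
  finally show ?thesis
    by (intro prob_spaceI) simp
qed

lemma ensemble_unit_measurable:
  assumes "\<forall>k<K. h k \<in> unit_measurable M"
    and "\<forall>k<K. w k \<in> unit_measurable M" and "\<forall>x. (\<Sum>k<K. w k x) = 1"
  shows "ensemble K w h \<in> unit_measurable M"
proof (rule unit_measurableI)
  show "ensemble K w h \<in> borel_measurable M"
    unfolding ensemble_def using assms(1,2)
    by (intro borel_measurable_sum borel_measurable_times) (auto dest: unit_measurableD(1))
  fix x
  have bounds: "0 \<le> w k x * h k x \<and> w k x * h k x \<le> w k x" if "k < K" for k
    using that assms(1,2) unit_measurableD(2)[of "w k" M x] unit_measurableD(2)[of "h k" M x]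
    by (auto intro: mult_left_le)
  have "(\<Sum>k<K. w k x * h k x) \<le> (\<Sum>k<K. w k x)"
    using bounds by (intro sum_mono) auto
  then show "ensemble K w h x \<in> {0..1}"
    unfolding ensemble_def using bounds assms(3) by (auto intro: sum_nonneg)
qed

lemma spanned_unit_measurable:
  assumes "H \<subseteq> unit_measurable M"
  shows "spanned M K H \<subseteq> unit_measurable M"
  using assms unfolding spanned_def
  by (auto intro!: ensemble_unit_measurable intro: unit_measurableI)

lemma ensemble_in_spanned:
  assumes "\<forall>k<K. h k \<in> H"
    and "\<forall>k<K. w k \<in> borel_measurable M \<and> (\<forall>x. w k x \<in> {0..1})" and "\<forall>x. (\<Sum>k<K. w k x) = 1"
  shows "ensemble K w h \<in> spanned M K H"
  using assms unfolding spanned_def by blast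

lemma subset_spanned:
  assumes "K > 0"
  shows "H \<subseteq> spanned M K H"
proof
  fix h assume "h \<in> H"
  define e :: "nat \<Rightarrow> 'a \<Rightarrow> real" where "e k = (\<lambda>_. if k = 0 then 1 else 0)" for k
  have "ensemble K e (\<lambda>_. h) = h"
    using assms by (simp add: ensemble_def e_def fun_eq_iff flip: sum_distrib_right)
  moreover have "ensemble K e (\<lambda>_. h) \<in> spanned M K H"
    using \<open>h \<in> H\<close> assms by (intro ensemble_in_spanned) (auto simp: e_def)
  ultimately show "h \<in> spanned M K H" by simp
qed

lemma disc_le_disc_plus_dHH:
  assumes "H \<subseteq> unit_measurable M"
    and "prob_space q" "sets q = sets M" "prob_space q'" "sets q' = sets M"
    and "g \<in> spanned M K H" "g' \<in> spanned M K H"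
  shows "disc q g g' \<le> disc q' g g' + dHH M K H q q' / 2"
proof -
  let ?gap = "\<lambda>gg. \<bar>disc q (fst gg) (snd gg) - disc q' (fst gg) (snd gg)\<bar>"
  have "?gap gg \<le> 1" if "gg \<in> spanned M K H \<times> spanned M K H" for gg
    using that spanned_unit_measurable[OF assms(1)] assms(2-5)
      disc_unit_interval[of q M "fst gg" "snd gg"] disc_unit_interval[of q' M "fst gg" "snd gg"]
    by (auto simp: mem_Times_iff subset_iff)
  then have "?gap (g, g') \<le> (SUP gg \<in> spanned M K H \<times> spanned M K H. ?gap gg)"
    using assms(6,7) by (intro cSUP_upper bdd_aboveI2) auto
  then show ?thesis
    unfolding dHH_def by simp
qed

theorem corollary1:
  fixes M :: "'a measure" and y :: "'a \<Rightarrow> real" and H :: "('a \<Rightarrow> real) set"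
    and K :: nat and n :: "nat \<Rightarrow> nat" and P :: "nat \<Rightarrow> 'a measure"
    and ps :: "'a measure" and hstar :: "'a \<Rightarrow> real"
    and hs :: "nat \<Rightarrow> 'a \<Rightarrow> real" and w :: "nat \<Rightarrow> 'a \<Rightarrow> real"
  assumes K_pos: "K > 0"
    and n_pos: "\<forall>k<K. n k > 0"
    and P_prob: "\<forall>k<K. prob_space (P k) \<and> sets (P k) = sets M"
    and ps_prob: "prob_space ps" and ps_sets: "sets ps = sets M"
    and y_meas: "y \<in> borel_measurable M" and y_range: "\<forall>x. y x \<in> {0..1}"
    and H_meas: "\<forall>h\<in>H. h \<in> borel_measurable M"
    and H_bin: "\<forall>h\<in>H. \<forall>x. h x \<in> {0, 1}"
    and hstar_in: "hstar \<in> H"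
    and hstar_min: "\<forall>h\<in>H. loss (mixture M K n P) y hstar \<le> loss (mixture M K n P) y h"
    and hs_in: "\<forall>k<K. hs k \<in> H"
    and w_meas: "\<forall>k<K. w k \<in> borel_measurable M"
    and w_range: "\<forall>k<K. \<forall>x. w k x \<in> {0..1}"
    and w_sum: "\<forall>x. (\<Sum>k<K. w k x) = 1"
    and opt: "loss (mixture M K n P) y (ensemble K w hs) \<le> (INF h\<in>H. loss (mixture M K n P) y h)"
  shows "\<forall>h\<in>H. loss (mixture M K n P) y hstar \<le> loss (mixture M K n P) y h \<and>
           loss (mixture M K n P) y h \<le> loss (mixture M K n P) y hstar
             + disc ps h (ensemble K w hs) + dHH M K H (mixture M K n P) ps / 2"
proof
  fix h assume "h \<in> H"
  define p where "p = mixture M K n P"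
  define g where "g = ensemble K w hs"
  have "0 < (\<Sum>j<K. n j)"
    using K_pos n_pos by (intro sum_pos2[where i=0]) auto
  then have p: "prob_space p" "sets p = sets M"
    unfolding p_def using P_prob by (simp_all add: prob_space_mixture)
  have "f x \<in> {0..1}" if "f \<in> H" for f x
    using H_bin that by (metis atLeastAtMost_iff insert_iff empty_iff order_refl zero_le_one)
  then have H_unit: "H \<subseteq> unit_measurable M"
    using H_meas by (auto intro: unit_measurableI)
  have g: "g \<in> spanned M K H"
    unfolding g_def using hs_in w_meas w_range w_sum by (intro ensemble_in_spanned) auto
  have y: "y \<in> unit_measurable M"
    using y_meas y_range by (intro unit_measurableI) auto
  have "loss p y g \<le> (INF h\<in>H. loss p y h)"
    using opt unfolding p_def g_def .
  also have "\<dots> \<le> loss p y hstar"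
    by (intro cINF_lower[OF _ hstar_in] bdd_belowI2[where m=0])
      (simp add: loss_def)
  finally have g_opt: "loss p y g \<le> loss p y hstar" .
  have "loss p y h \<le> disc p h g + loss p y g"
    unfolding loss_eq_disc using p H_unit spanned_unit_measurable[OF H_unit] \<open>h \<in> H\<close> g y
    by (intro disc_triangle prob_space.axioms(1)) auto
  moreover have "disc p h g \<le> disc ps h g + dHH M K H p ps / 2"
    using p ps_prob ps_sets H_unit g \<open>h \<in> H\<close> subset_spanned[OF K_pos, of H M]
    by (intro disc_le_disc_plus_dHH) auto
  moreover have "loss p y hstar \<le> loss p y h"
    using hstar_min \<open>h \<in> H\<close> unfolding p_def by blast
  ultimately show "loss p y hstar \<le> loss p y h \<and>
      loss p y h \<le> loss p y hstar + disc ps h (ensemble K w hs) + dHH M K H p ps / 2"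
    using g_opt unfolding g_def by linarith
qed

end
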